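(* Let $C$ be a cancellative monoid and suppose that $IH^0(C)$ is $0$-bisimple. Then $IH^0(C)$ is $F^*$-inverse if and only if the partially ordered set $P_r(C)$ of principal right ideals of $C$ (ordered by inclusion) is a join semilattice.
   Context: For a right cancellative monoid $C$ and $a\in C$, $\rho_a:C\to C$, $x\mapsto xa$, is regarded as a partial bijection of $C$; the inverse hull $IH(C)$ is the inverse submonoid of the symmetric inverse monoid on $C$ generated by all $\rho_a$, and $IH^0(C)=IH(C)\cup\{\emptyset\}$ with the empty map as zero. An inverse monoid with zero is $0$-bisimple if all its nonzero elements are $\mathscr{D}$-related. The natural partial order on an inverse monoid is $a\le b$ iff $a=eb$ for some idempotent $e$; an inverse monoid is $F^*$-inverse if every nonzero element lies beneath a unique maximal element in this order. A join semilattice is a poset in which any two elements have a least upper bound. *)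

theory Defs
  imports Main
begin

(* Partial bijections of a type 'a are represented by their graphs, i.e. relations
   ('a \<times> 'a) set.  Composition follows the right-action convention used for
   \<rho>_a : x \<mapsto> x a:  f \<cdot> g = "first f, then g" = f O g, so \<rho>_a \<cdot> \<rho>_b = \<rho>_(ab). *)

definition rho :: "'a::monoid_mult \<Rightarrow> ('a \<times> 'a) set" where
  "rho a = {(x, x * a) | x. True}"

inductive_set IH :: "('a::monoid_mult \<times> 'a) set set" where
  gen: "rho a \<in> IH"
| one: "Id \<in> IH"
| inv: "f \<in> IH \<Longrightarrow> f\<inverse> \<in> IH"
| comp: "f \<in> IH \<Longrightarrow> g \<in> IH \<Longrightarrow> f O g \<in> IH"

definition IH0 :: "('a::monoid_mult \<times> 'a) set set" where
  "IH0 = insert {} IH"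

definition idem_in :: "('b \<times> 'b) set set \<Rightarrow> ('b \<times> 'b) set \<Rightarrow> bool" where
  "idem_in S e \<longleftrightarrow> e \<in> S \<and> e O e = e"

definition nat_le :: "('b \<times> 'b) set set \<Rightarrow> ('b \<times> 'b) set \<Rightarrow> ('b \<times> 'b) set \<Rightarrow> bool" where
  "nat_le S a b \<longleftrightarrow> (\<exists>e. idem_in S e \<and> a = e O b)"

(* Green's relations; S is a monoid (contains Id), so S^1 = S *)
definition green_L :: "('b \<times> 'b) set set \<Rightarrow> ('b \<times> 'b) set \<Rightarrow> ('b \<times> 'b) set \<Rightarrow> bool" where
  "green_L S a b \<longleftrightarrow> {s O a | s. s \<in> S} = {s O b | s. s \<in> S}"

definition green_R :: "('b \<times> 'b) set set \<Rightarrow> ('b \<times> 'b) set \<Rightarrow> ('b \<times> 'b) set \<Rightarrow> bool" where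
  "green_R S a b \<longleftrightarrow> {a O s | s. s \<in> S} = {b O s | s. s \<in> S}"

definition green_D :: "('b \<times> 'b) set set \<Rightarrow> ('b \<times> 'b) set \<Rightarrow> ('b \<times> 'b) set \<Rightarrow> bool" where
  "green_D S a b \<longleftrightarrow> (\<exists>c\<in>S. green_L S a c \<and> green_R S c b)"

definition zero_bisimple :: "('b \<times> 'b) set set \<Rightarrow> bool" where
  "zero_bisimple S \<longleftrightarrow> (\<forall>a\<in>S. \<forall>b\<in>S. a \<noteq> {} \<longrightarrow> b \<noteq> {} \<longrightarrow> green_D S a b)"

definition maximal_in :: "('b \<times> 'b) set set \<Rightarrow> ('b \<times> 'b) set \<Rightarrow> bool" where
  "maximal_in S m \<longleftrightarrow> m \<in> S \<and> (\<forall>x\<in>S. nat_le S m x \<longrightarrow> x = m)"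

definition F_star_inverse :: "('b \<times> 'b) set set \<Rightarrow> bool" where
  "F_star_inverse S \<longleftrightarrow>
     (\<forall>a\<in>S. a \<noteq> {} \<longrightarrow> (\<exists>!m. maximal_in S m \<and> nat_le S a m))"

definition principal_right_ideals :: "'a::monoid_mult set set" where
  "principal_right_ideals = {{a * x | x. True} | a. True}"

definition join_semilattice_incl :: "'b set set \<Rightarrow> bool" where
  "join_semilattice_incl P \<longleftrightarrow>
     (\<forall>I\<in>P. \<forall>J\<in>P. \<exists>K\<in>P. I \<subseteq> K \<and> J \<subseteq> K \<and> (\<forall>L\<in>P. I \<subseteq> L \<and> J \<subseteq> L \<longrightarrow> K \<subseteq> L))"

end

theory Submission
  imports Defs
begin

text \<open>
  Under right cancellation every element of IH(C) is a partial bijection commuting with left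
  multiplication, so the natural partial order of IH0(C) is inclusion of graphs. A nonzero f is
  D-related to the identity; this makes its domain a principal left ideal Cn, and then
  f = rho_n^-1 rho_y = {(zn, zy)}. Since rho_s^-1 rho_t is contained in rho_a^-1 rho_b iff
  (s, t) = (ua, ub) for some u, the element rho_a^-1 rho_b is maximal iff a and b have no
  non-unit common left divisor, and the maximal elements above rho_s^-1 rho_t come from the
  factorisations s = ka, t = kb with such a, b. This maximal element is unique exactly when s and t
  have a greatest common left divisor k, i.e. when kC is the least principal right ideal
  containing sC and tC.
\<close>

subsection \<open>The inverse hull as equivariant partial bijections\<close>

definition equivariant_pbij :: "('a::monoid_mult \<times> 'a) set \<Rightarrow> bool" where
  "equivariant_pbij f \<longleftrightarrow> single_valued f \<and> single_valued (f\<inverse>) \<and>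
     (\<forall>x y z. (x, y) \<in> f \<longrightarrow> (z * x, z * y) \<in> f)"

lemma equivariant_pbij_rho:
  assumes right_cancel: "\<And>c :: 'a::monoid_mult. inj (\<lambda>a. a * c)"
  shows "equivariant_pbij (rho (m::'a))"
  using right_cancel unfolding equivariant_pbij_def rho_def single_valued_def
  by (auto simp: mult.assoc dest: injD)

lemma equivariant_pbij_converse: "equivariant_pbij f \<Longrightarrow> equivariant_pbij (f\<inverse>)"
  unfolding equivariant_pbij_def by auto

lemma equivariant_pbij_relcomp:
  "equivariant_pbij f \<Longrightarrow> equivariant_pbij g \<Longrightarrow> equivariant_pbij (f O g)"
  unfolding equivariant_pbij_def
  by (auto intro: single_valued_relcomp simp: converse_relcomp) blast

lemma IH0_equivariant_pbij:
  assumes right_cancel: "\<And>c :: 'a::monoid_mult. inj (\<lambda>a. a * c)"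
    and "(f :: ('a \<times> 'a) set) \<in> IH0"
  shows "equivariant_pbij f"
proof -
  have "equivariant_pbij g" if "g \<in> IH" for g :: "('a \<times> 'a) set"
    using that
  proof (induction rule: IH.induct)
    case one
    show ?case unfolding equivariant_pbij_def by auto
  qed (auto intro: equivariant_pbij_rho right_cancel equivariant_pbij_converse
      equivariant_pbij_relcomp)
  moreover have "equivariant_pbij {}" unfolding equivariant_pbij_def by auto
  ultimately show ?thesis using assms(2) unfolding IH0_def by blast
qed

lemma Id_in_IH0: "Id \<in> IH0"
  unfolding IH0_def by (simp add: IH.one)

lemma converse_in_IH0: "f \<in> IH0 \<Longrightarrow> f\<inverse> \<in> IH0"
  unfolding IH0_def by (auto intro: IH.inv)

lemma relcomp_in_IH0: "f \<in> IH0 \<Longrightarrow> g \<in> IH0 \<Longrightarrow> f O g \<in> IH0"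
  unfolding IH0_def by (auto intro: IH.comp)

lemma idempotent_pbij_subset_Id:
  assumes "single_valued e" and "single_valued (e\<inverse>)" and "e O e = e"
  shows "e \<subseteq> Id"
proof
  fix p assume "p \<in> e"
  then obtain x y where p: "p = (x, y)" "(x, y) \<in> e" by (cases p) auto
  with assms(3) obtain w where "(x, w) \<in> e" "(w, y) \<in> e" by blast
  with p assms(1) have "(y, y) \<in> e" by (metis single_valuedD)
  with p assms(2) show "p \<in> Id" by (metis single_valuedD converse_iff pair_in_Id_conv)
qed

lemma relcomp_converse_eq_Id_on:
  assumes "single_valued (f\<inverse>)"
  shows "f O f\<inverse> = Id_on (Domain f)"
  using assms unfolding single_valued_def by auto

lemma Id_on_Domain_relcomp:
  assumes "f \<subseteq> g" and "single_valued g"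
  shows "Id_on (Domain f) O g = f"
  using assms unfolding single_valued_def by auto

lemma nat_le_IH0_iff_subset:
  assumes right_cancel: "\<And>c :: 'a::monoid_mult. inj (\<lambda>a. a * c)"
    and f: "(f :: ('a \<times> 'a) set) \<in> IH0" and g: "g \<in> IH0"
  shows "nat_le IH0 f g \<longleftrightarrow> f \<subseteq> g"
proof
  assume "nat_le IH0 f g"
  then obtain e where e: "e \<in> IH0" "e O e = e" "f = e O g"
    unfolding nat_le_def idem_in_def by blast
  then have "e \<subseteq> Id"
    using IH0_equivariant_pbij[OF right_cancel] idempotent_pbij_subset_Id
    unfolding equivariant_pbij_def by blast
  with e(3) show "f \<subseteq> g" by blast
next
  assume "f \<subseteq> g"
  have f_pbij: "single_valued (f\<inverse>)" and g_pbij: "single_valued g"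
    using f g IH0_equivariant_pbij[OF right_cancel] unfolding equivariant_pbij_def by auto
  have "(f O f\<inverse>) O (f O f\<inverse>) = f O f\<inverse>"
    unfolding relcomp_converse_eq_Id_on[OF f_pbij] by auto
  then have "idem_in IH0 (f O f\<inverse>)"
    unfolding idem_in_def using f by (auto intro: relcomp_in_IH0 converse_in_IH0)
  moreover have "f = (f O f\<inverse>) O g"
    using Id_on_Domain_relcomp[OF \<open>f \<subseteq> g\<close> g_pbij] relcomp_converse_eq_Id_on[OF f_pbij]
    by simp
  ultimately show "nat_le IH0 f g" unfolding nat_le_def by blast
qed

subsection \<open>Nonzero elements under 0-bisimplicity\<close>

definition rho_frac :: "'a::monoid_mult \<Rightarrow> 'a \<Rightarrow> ('a \<times> 'a) set" where
  "rho_frac a b = (rho a)\<inverse> O rho b"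

lemma rho_frac_eq: "rho_frac a b = {(z * a, z * b) | z. True}"
  unfolding rho_frac_def rho_def by auto

lemma rho_frac_in_IH0: "rho_frac a b \<in> IH0"
  unfolding rho_frac_def IH0_def by (auto intro: IH.intros)

lemma rho_frac_nonempty: "rho_frac a b \<noteq> {}"
  unfolding rho_frac_eq by auto

lemma rho_frac_one_left: "rho_frac 1 m = rho m"
  unfolding rho_frac_eq rho_def by auto

lemma rho_frac_subset_iff: "rho_frac s t \<subseteq> rho_frac a b \<longleftrightarrow> (\<exists>u. s = u * a \<and> t = u * b)"
proof
  assume "rho_frac s t \<subseteq> rho_frac a b"
  moreover have "(s, t) \<in> rho_frac s t" unfolding rho_frac_eq by (auto intro: exI[of _ 1])
  ultimately show "\<exists>u. s = u * a \<and> t = u * b" unfolding rho_frac_eq by blast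
next
  assume "\<exists>u. s = u * a \<and> t = u * b"
  then obtain u where "s = u * a" "t = u * b" by blast
  then have "(z * s, z * t) = ((z * u) * a, (z * u) * b)" for z by (simp add: mult.assoc)
  then show "rho_frac s t \<subseteq> rho_frac a b" unfolding rho_frac_eq by blast
qed

lemma equivariant_pbij_eq_rho_frac:
  assumes f: "equivariant_pbij f" and "(n, y) \<in> f" and dom: "Domain f = {x * n | x. True}"
  shows "f = rho_frac n y"
proof
  have in_f: "(z * n, z * y) \<in> f" for z
    using f \<open>(n, y) \<in> f\<close> unfolding equivariant_pbij_def by blast
  then show "rho_frac n y \<subseteq> f" unfolding rho_frac_eq by blast
  show "f \<subseteq> rho_frac n y"
  proof
    fix p assume "p \<in> f"
    then obtain x w where p: "p = (x, w)" "(x, w) \<in> f" by (cases p) auto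
    then have "x \<in> Domain f" by blast
    then obtain z where "x = z * n" using dom by blast
    with p have "w = z * y"
      using f in_f unfolding equivariant_pbij_def by (meson single_valuedD)
    with p \<open>x = z * n\<close> show "p \<in> rho_frac n y" unfolding rho_frac_eq by blast
  qed
qed

lemma green_R_Id_imp_rho:
  assumes right_cancel: "\<And>c :: 'a::monoid_mult. inj (\<lambda>a. a * c)"
    and c: "(c :: ('a \<times> 'a) set) \<in> IH0" and "green_R IH0 c Id"
  shows "\<exists>m. c = rho m"
proof -
  have "Id \<in> {c O s | s. s \<in> IH0}"
    using \<open>green_R IH0 c Id\<close> Id_in_IH0 unfolding green_R_def by auto
  then obtain s where "Id = c O s" by blast
  then have "(x, x) \<in> c O s" for x by (metis IdI)
  then have total: "x \<in> Domain c" for x by blast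
  then have "Domain c = {x * 1 | x. True}" \<comment> \<open>the full domain, as the principal left ideal C1\<close>
    by auto
  moreover obtain m where "(1, m) \<in> c" using total by blast
  ultimately have "c = rho_frac 1 m"
    using equivariant_pbij_eq_rho_frac IH0_equivariant_pbij[OF right_cancel c] by blast
  then show ?thesis unfolding rho_frac_one_left by blast
qed

lemma green_L_Range_eq:
  assumes "Id \<in> S" and "green_L S f c"
  shows "Range f = Range c"
proof -
  have "Id O f \<in> {s O f | s. s \<in> S}" "Id O c \<in> {s O c | s. s \<in> S}"
    using \<open>Id \<in> S\<close> by blast+
  then have "f \<in> {s O c | s. s \<in> S}" "c \<in> {s O f | s. s \<in> S}"
    using \<open>green_L S f c\<close> unfolding green_L_def by simp_all
  then obtain s1 s2 where "f = s1 O c" "c = s2 O f" by blast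
  then show ?thesis by blast
qed

lemma IH0_Range_eq_principal_left_ideal:
  assumes right_cancel: "\<And>c :: 'a::monoid_mult. inj (\<lambda>a. a * c)"
    and bisimple: "zero_bisimple (IH0 :: ('a \<times> 'a) set set)"
    and f: "(f :: ('a \<times> 'a) set) \<in> IH0" and "f \<noteq> {}"
  shows "\<exists>m. Range f = {x * m | x. True}"
proof -
  obtain c where c: "c \<in> IH0" "green_L IH0 f c" "green_R IH0 c Id"
    using bisimple f \<open>f \<noteq> {}\<close> Id_in_IH0 unfolding zero_bisimple_def green_D_def by blast
  then obtain m where "c = rho m" using green_R_Id_imp_rho[OF right_cancel] by blast
  moreover have "Range f = Range c" using green_L_Range_eq[OF Id_in_IH0 c(2)] .
  ultimately show ?thesis unfolding rho_def by auto
qed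

lemma IH0_eq_rho_frac:
  assumes right_cancel: "\<And>c :: 'a::monoid_mult. inj (\<lambda>a. a * c)"
    and bisimple: "zero_bisimple (IH0 :: ('a \<times> 'a) set set)"
    and f: "(f :: ('a \<times> 'a) set) \<in> IH0" and "f \<noteq> {}"
  shows "\<exists>n y. f = rho_frac n y"
proof -
  obtain n where dom: "Domain f = {x * n | x. True}"
    using IH0_Range_eq_principal_left_ideal[OF right_cancel bisimple converse_in_IH0[OF f]] \<open>f \<noteq> {}\<close>
    by auto
  then have "n \<in> Domain f" by (auto intro: exI[of _ 1])
  then obtain y where "(n, y) \<in> f" by blast
  then show ?thesis
    using equivariant_pbij_eq_rho_frac IH0_equivariant_pbij[OF right_cancel f] dom by blast
qed

lemma ball_IH0_nonempty_iff:
  assumes right_cancel: "\<And>c :: 'a::monoid_mult. inj (\<lambda>a. a * c)"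
    and bisimple: "zero_bisimple (IH0 :: ('a \<times> 'a) set set)"
  shows "(\<forall>f \<in> (IH0 :: ('a \<times> 'a) set set). f \<noteq> {} \<longrightarrow> P f) \<longleftrightarrow> (\<forall>s t. P (rho_frac s t))"
proof (intro iffI allI ballI impI)
  fix s t :: 'a
  assume "\<forall>f \<in> (IH0 :: ('a \<times> 'a) set set). f \<noteq> {} \<longrightarrow> P f"
  then have "rho_frac s t \<noteq> {} \<longrightarrow> P (rho_frac s t)" using rho_frac_in_IH0 by (rule bspec)
  then show "P (rho_frac s t)" using rho_frac_nonempty by (rule mp)
next
  fix f :: "('a \<times> 'a) set"
  assume "\<forall>s t. P (rho_frac s t)" and "f \<in> IH0" "f \<noteq> {}"
  moreover obtain n y where "f = rho_frac n y"
    using IH0_eq_rho_frac[OF right_cancel bisimple \<open>f \<in> IH0\<close> \<open>f \<noteq> {}\<close>] by blast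
  ultimately show "P f" by simp
qed

subsection \<open>Maximal elements and greatest common left divisors\<close>

definition left_dvd :: "'a::monoid_mult \<Rightarrow> 'a \<Rightarrow> bool" where
  "left_dvd l a \<longleftrightarrow> (\<exists>v. a = l * v)"

text \<open>\<open>left_dvd l 1\<close> says that l has a right inverse, which makes l a unit once C is left
  cancellative.\<close>

definition left_coprime :: "'a::monoid_mult \<Rightarrow> 'a \<Rightarrow> bool" where
  "left_coprime a b \<longleftrightarrow> (\<forall>l. left_dvd l a \<longrightarrow> left_dvd l b \<longrightarrow> left_dvd l 1)"

definition is_gcld :: "'a::monoid_mult \<Rightarrow> 'a \<Rightarrow> 'a \<Rightarrow> bool" where
  "is_gcld k s t \<longleftrightarrow> left_dvd k s \<and> left_dvd k t \<and>
     (\<forall>l. left_dvd l s \<longrightarrow> left_dvd l t \<longrightarrow> left_dvd l k)"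

lemma right_inverse_imp_left_inverse:
  assumes left_cancel: "\<And>c :: 'a::monoid_mult. inj ((*) c)" and "l * w = (1::'a)"
  shows "w * l = 1"
proof -
  have "l * (w * l) = l * 1" using \<open>l * w = 1\<close> by (simp flip: mult.assoc)
  then show ?thesis by (rule injD[OF left_cancel])
qed

lemma maximal_in_IH0_iff:
  assumes right_cancel: "\<And>c :: 'a::monoid_mult. inj (\<lambda>a. a * c)"
  shows "maximal_in IH0 m \<longleftrightarrow> m \<in> IH0 \<and> (\<forall>x \<in> (IH0 :: ('a \<times> 'a) set set). m \<subseteq> x \<longrightarrow> x = m)"
proof (cases "m \<in> IH0")
  case True
  then show ?thesis
    unfolding maximal_in_def by (simp add: nat_le_IH0_iff_subset[OF right_cancel True])
qed (simp add: maximal_in_def)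

lemma maximal_in_IH0_rho_frac_iff:
  assumes left_cancel: "\<And>c :: 'a::monoid_mult. inj ((*) c)"
    and right_cancel: "\<And>c :: 'a. inj (\<lambda>a. a * c)"
    and bisimple: "zero_bisimple (IH0 :: ('a \<times> 'a) set set)"
  shows "maximal_in IH0 (rho_frac a b) \<longleftrightarrow> left_coprime a (b::'a)"
proof
  assume max: "maximal_in IH0 (rho_frac a b)"
  show "left_coprime a b" unfolding left_coprime_def left_dvd_def
  proof (intro allI impI, elim exE)
    fix l a' b' assume "a = l * a'" "b = l * b'"
    then have "rho_frac a b \<subseteq> rho_frac a' b'" unfolding rho_frac_subset_iff by blast
    then have "rho_frac a' b' = rho_frac a b"
      using max rho_frac_in_IH0 unfolding maximal_in_IH0_iff[OF right_cancel] by blast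
    then obtain w where "a' = w * a" using rho_frac_subset_iff by blast
    with \<open>a = l * a'\<close> have "1 * a = (l * w) * a" by (simp add: mult.assoc)
    then have "1 = l * w" by (rule injD[OF right_cancel])
    then show "\<exists>v. 1 = l * v" ..
  qed
next
  assume coprime: "left_coprime a b"
  have "x = rho_frac a b" if "x \<in> IH0" and sub: "rho_frac a b \<subseteq> x" for x
  proof -
    obtain a' b' where x: "x = rho_frac a' b'"
      using IH0_eq_rho_frac[OF right_cancel bisimple \<open>x \<in> IH0\<close>] sub rho_frac_nonempty by blast
    then obtain v where v: "a = v * a'" "b = v * b'" using sub rho_frac_subset_iff by blast
    then obtain w where "1 = v * w"
      using coprime unfolding left_coprime_def left_dvd_def by blast
    from this[symmetric] have "w * v = 1" by (rule right_inverse_imp_left_inverse[OF left_cancel])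
    then have "a' = w * a \<and> b' = w * b" using v by (simp flip: mult.assoc)
    then have "x \<subseteq> rho_frac a b" unfolding x rho_frac_subset_iff by blast
    then show ?thesis using sub by blast
  qed
  then show "maximal_in IH0 (rho_frac a b)"
    unfolding maximal_in_IH0_iff[OF right_cancel] using rho_frac_in_IH0 by blast
qed

lemma F_star_inverse_IH0_iff:
  assumes right_cancel: "\<And>c :: 'a::monoid_mult. inj (\<lambda>a. a * c)"
    and bisimple: "zero_bisimple (IH0 :: ('a \<times> 'a) set set)"
  shows "F_star_inverse (IH0 :: ('a \<times> 'a) set set) \<longleftrightarrow>
    (\<forall>s t :: 'a. \<exists>!m. maximal_in IH0 m \<and> rho_frac s t \<subseteq> m)"
proof -
  have le_iff: "maximal_in IH0 m \<and> nat_le IH0 f m \<longleftrightarrow> maximal_in IH0 m \<and> f \<subseteq> m"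
    if "f \<in> IH0" for f m :: "('a \<times> 'a) set"
    using nat_le_IH0_iff_subset[OF right_cancel that] unfolding maximal_in_def by blast
  have "F_star_inverse (IH0 :: ('a \<times> 'a) set set) \<longleftrightarrow>
      (\<forall>f \<in> (IH0 :: ('a \<times> 'a) set set). f \<noteq> {} \<longrightarrow> (\<exists>!m. maximal_in IH0 m \<and> f \<subseteq> m))"
    unfolding F_star_inverse_def by (simp add: le_iff)
  also have "\<dots> \<longleftrightarrow> (\<forall>s t :: 'a. \<exists>!m. maximal_in IH0 m \<and> rho_frac s t \<subseteq> m)"
    by (rule ball_IH0_nonempty_iff[OF right_cancel bisimple])
  finally show ?thesis .
qed

lemma maximal_above_rho_frac:
  assumes right_cancel: "\<And>c :: 'a::monoid_mult. inj (\<lambda>a. a * c)"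
    and bisimple: "zero_bisimple (IH0 :: ('a \<times> 'a) set set)"
    and "maximal_in IH0 m" and "rho_frac s t \<subseteq> m"
  shows "\<exists>a b. m = rho_frac a (b::'a)"
proof -
  have "m \<in> IH0" using \<open>maximal_in IH0 m\<close> by (simp add: maximal_in_def)
  moreover have "m \<noteq> {}" using \<open>rho_frac s t \<subseteq> m\<close> rho_frac_nonempty[of s t] by auto
  ultimately show ?thesis by (rule IH0_eq_rho_frac[OF right_cancel bisimple])
qed

lemma gcld_if_unique_maximal:
  assumes right_cancel: "\<And>c :: 'a::monoid_mult. inj (\<lambda>a. a * c)"
    and bisimple: "zero_bisimple (IH0 :: ('a \<times> 'a) set set)"
    and unique_max: "\<forall>s t :: 'a. \<exists>!m. maximal_in IH0 m \<and> rho_frac s t \<subseteq> m"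
  shows "\<exists>k. is_gcld k s (t::'a)"
proof -
  obtain m where m: "maximal_in IH0 m" "rho_frac s t \<subseteq> m"
    and m_unique: "\<And>m'. maximal_in IH0 m' \<Longrightarrow> rho_frac s t \<subseteq> m' \<Longrightarrow> m' = m"
    using unique_max[rule_format, of s t] by (auto elim: ex1E)
  obtain a b where mab: "m = rho_frac a b"
    using maximal_above_rho_frac[OF right_cancel bisimple m] by blast
  then obtain k where k: "s = k * a" "t = k * b"
    using m(2) rho_frac_subset_iff by blast
  have "left_dvd l k" if st: "s = l * a'" "t = l * b'" for l a' b'
  proof -
    obtain m' where m': "maximal_in IH0 m'" "rho_frac a' b' \<subseteq> m'"
      using unique_max[rule_format, of a' b'] by (auto elim: ex1E)
    moreover have "rho_frac s t \<subseteq> rho_frac a' b'" using st rho_frac_subset_iff by blast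
    ultimately have "m' = m" using m_unique by blast
    then obtain v where "a' = v * a" using m'(2) mab rho_frac_subset_iff by blast
    with k st have "k * a = (l * v) * a" by (simp add: mult.assoc)
    then have "k = l * v" by (rule injD[OF right_cancel])
    then show ?thesis unfolding left_dvd_def ..
  qed
  with k show ?thesis unfolding is_gcld_def left_dvd_def by blast
qed

lemma unique_maximal_if_gcld:
  assumes left_cancel: "\<And>c :: 'a::monoid_mult. inj ((*) c)"
    and right_cancel: "\<And>c :: 'a. inj (\<lambda>a. a * c)"
    and bisimple: "zero_bisimple (IH0 :: ('a \<times> 'a) set set)"
    and gcld: "is_gcld k s (t::'a)"
  shows "\<exists>!m. maximal_in IH0 m \<and> rho_frac s t \<subseteq> m"
proof -
  obtain a b where k: "s = k * a" "t = k * b"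
    using gcld unfolding is_gcld_def left_dvd_def by blast
  have factor: "a' = w * a \<and> b' = w * b" if st: "s = u * a'" "t = u * b'" and "k = u * w"
    for u w a' b'
  proof
    from k st \<open>k = u * w\<close> have "u * a' = u * (w * a)" by (simp add: mult.assoc)
    then show "a' = w * a" by (rule injD[OF left_cancel])
    from k st \<open>k = u * w\<close> have "u * b' = u * (w * b)" by (simp add: mult.assoc)
    then show "b' = w * b" by (rule injD[OF left_cancel])
  qed
  have "left_coprime a b" unfolding left_coprime_def left_dvd_def
  proof (intro allI impI, elim exE)
    fix l a' b' assume "a = l * a'" "b = l * b'"
    with k have "s = (k * l) * a'" "t = (k * l) * b'" by (simp_all add: mult.assoc)
    then obtain w where "k = (k * l) * w"
      using gcld unfolding is_gcld_def left_dvd_def by blast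
    then have "k * 1 = k * (l * w)" by (simp add: mult.assoc)
    then have "1 = l * w" by (rule injD[OF left_cancel])
    then show "\<exists>v. 1 = l * v" ..
  qed
  then have max: "maximal_in IH0 (rho_frac a b)"
    using maximal_in_IH0_rho_frac_iff[OF left_cancel right_cancel bisimple] by blast
  have unique: "m = rho_frac a b" if m: "maximal_in IH0 m" "rho_frac s t \<subseteq> m" for m
  proof -
    obtain a' b' where mab: "m = rho_frac a' b'"
      using maximal_above_rho_frac[OF right_cancel bisimple m] by blast
    then obtain u where u: "s = u * a'" "t = u * b'" using m(2) rho_frac_subset_iff by blast
    then obtain w where "k = u * w"
      using gcld unfolding is_gcld_def left_dvd_def by blast
    with u have "a' = w * a \<and> b' = w * b" by (rule factor)
    then have "m \<subseteq> rho_frac a b" unfolding mab rho_frac_subset_iff by blast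
    moreover have "\<forall>x \<in> IH0. m \<subseteq> x \<longrightarrow> x = m"
      using m(1) unfolding maximal_in_IH0_iff[OF right_cancel] by (rule conjunct2)
    then have "m \<subseteq> rho_frac a b \<longrightarrow> rho_frac a b = m" using rho_frac_in_IH0 by (rule bspec)
    ultimately show ?thesis by simp
  qed
  show ?thesis
  proof (rule ex1I)
    show "maximal_in IH0 (rho_frac a b) \<and> rho_frac s t \<subseteq> rho_frac a b"
      using max k rho_frac_subset_iff by blast
  next
    fix m assume "maximal_in IH0 m \<and> rho_frac s t \<subseteq> m"
    then show "m = rho_frac a b" by (elim conjE) (rule unique)
  qed
qed

lemma unique_maximal_iff_ex_gcld:
  assumes left_cancel: "\<And>c :: 'a::monoid_mult. inj ((*) c)"
    and right_cancel: "\<And>c :: 'a. inj (\<lambda>a. a * c)"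
    and bisimple: "zero_bisimple (IH0 :: ('a \<times> 'a) set set)"
  shows "(\<forall>s t :: 'a. \<exists>!m. maximal_in IH0 m \<and> rho_frac s t \<subseteq> m) \<longleftrightarrow>
    (\<forall>s t :: 'a. \<exists>k. is_gcld k s t)"
proof (intro iffI allI)
  fix s t :: 'a
  assume "\<forall>s t :: 'a. \<exists>!m. maximal_in IH0 m \<and> rho_frac s t \<subseteq> m"
  then show "\<exists>k. is_gcld k s t" by (rule gcld_if_unique_maximal[OF right_cancel bisimple])
next
  fix s t :: 'a
  assume "\<forall>s t :: 'a. \<exists>k. is_gcld k s t"
  then obtain k where "is_gcld k s t" by blast
  then show "\<exists>!m. maximal_in IH0 m \<and> rho_frac s t \<subseteq> m"
    by (rule unique_maximal_if_gcld[OF left_cancel right_cancel bisimple])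
qed

lemma principal_right_ideal_subset_iff:
  "{k * x | x. True} \<subseteq> {l * x | x. True} \<longleftrightarrow> left_dvd l (k::'a::monoid_mult)"
proof
  assume "{k * x | x. True} \<subseteq> {l * x | x. True}"
  moreover have "k \<in> {k * x | x. True}" by (rule CollectI, rule exI[of _ 1]) simp
  ultimately show "left_dvd l k" unfolding left_dvd_def by blast
next
  assume "left_dvd l k"
  then obtain v where "k = l * v" unfolding left_dvd_def ..
  then have "k * x = l * (v * x)" for x by (simp add: mult.assoc)
  then show "{k * x | x. True} \<subseteq> {l * x | x. True}" by blast
qed

lemma join_semilattice_incl_principal_right_ideals_iff:
  "join_semilattice_incl (principal_right_ideals :: 'a::monoid_mult set set) \<longleftrightarrow>
    (\<forall>s t :: 'a. \<exists>k. is_gcld k s t)"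
proof -
  have "principal_right_ideals = range (\<lambda>a::'a. {a * x | x. True})"
    unfolding principal_right_ideals_def image_def by simp
  then show ?thesis
    unfolding join_semilattice_incl_def is_gcld_def
    by (simp only: \<open>principal_right_ideals = _\<close> ball_simps bex_simps ball_UNIV bex_UNIV
        principal_right_ideal_subset_iff imp_conjL)
qed

theorem proposition4p2:
  assumes left_cancel: "\<And>a b c :: 'a::monoid_mult. c * a = c * b \<Longrightarrow> a = b"
    and right_cancel: "\<And>a b c :: 'a. a * c = b * c \<Longrightarrow> a = b"
    and bisimple: "zero_bisimple (IH0 :: ('a \<times> 'a) set set)"
  shows "F_star_inverse (IH0 :: ('a \<times> 'a) set set) \<longleftrightarrow>
         join_semilattice_incl (principal_right_ideals :: 'a set set)"
proof -
  have left_inj: "inj ((*) c)" and right_inj: "inj (\<lambda>a. a * c)" for c :: 'a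
    by (rule injI, erule left_cancel) (rule injI, erule right_cancel)
  show ?thesis
    unfolding F_star_inverse_IH0_iff[OF right_inj bisimple]
      join_semilattice_incl_principal_right_ideals_iff
    by (rule unique_maximal_iff_ex_gcld[OF left_inj right_inj bisimple])
qed

end
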